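(* Let $\alpha,\beta>0$ and let $\mathrm{sgn}$ denote the sign function. (i) If $\tau_0=\tau_1+\tau_2$ and $k_0=k_1+k_2\neq0$ (with $\tau_i\in\mathbb{R}$, $k_i\in\mathbb{Z}$), then $$\max\{|\tau_0-\alpha k_0^2|,\ |\tau_1-\alpha k_1^2|,\ ||\tau_2|-\beta|k_2||\}\gtrsim|\alpha|\,|k_2|\,\Big|k_0+k_1-\tfrac{\beta}{\alpha}S_1\Big|,\quad S_1=\mathrm{sgn}(\tau_2k_2).$$ (ii) If $\tau_0=\tau_1-\tau_2$ and $k_0=k_1-k_2\neq0$, then $$\max\{||\tau_0|-\beta|k_0||,\ |\tau_1-\alpha k_1^2|,\ |\tau_2-\alpha k_2^2|\}\gtrsim|\alpha|\,|k_0|\,\Big|k_1+k_2-\tfrac{\beta}{\alpha}S_2\Big|,\quad S_2=\mathrm{sgn}(\tau_0k_0).$$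
   Context: $A\gtrsim B$ means $A\ge cB$ for an absolute constant $c>0$. *)

theory Defs
  imports Complex_Main
begin

end

theory Submission
  imports Defs
begin

text \<open>Both bounds come from a resonance identity. In case (i),
  \<open>k0\<^sup>2 - k1\<^sup>2 = k2 (k0 + k1)\<close> and \<open>\<tau>1 + \<tau>2 - \<tau>0 = 0\<close> give
  \<open>\<alpha> k2 (k0 + k1 - (\<beta>/\<alpha>) S1) = (\<tau>1 - \<alpha> k1\<^sup>2) - (\<tau>0 - \<alpha> k0\<^sup>2) + (\<tau>2 - S1 \<beta> k2)\<close>,
  and for \<open>S1 = sgn (\<tau>2 k2)\<close> the last term is bounded by \<open>\<bar>\<bar>\<tau>2\<bar> - \<beta> \<bar>k2\<bar>\<bar>\<close>.
  The triangle inequality then gives the claim with constant \<open>1/3\<close>; case (ii) is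
  symmetric.\<close>

lemma abs_sub_sgn_mult_le:
  fixes t b k :: real
  shows "\<bar>t - sgn (t * k) * b * k\<bar> \<le> \<bar>\<bar>t\<bar> - b * \<bar>k\<bar>\<bar>"
proof -
  have "sgn (t * k) * k = sgn t * \<bar>k\<bar>"
    by (simp add: sgn_mult abs_sgn mult.commute mult.left_commute)
  then have "t - sgn (t * k) * b * k = sgn t * (\<bar>t\<bar> - b * \<bar>k\<bar>)"
    by (metis sgn_mult_abs mult.commute mult.left_commute right_diff_distrib)
  then show ?thesis
    by (simp add: abs_mult abs_sgn_eq)
qed

lemma abs_add3_le_3_Max:
  fixes x y z a b c :: real
  assumes "\<bar>x\<bar> \<le> a" "\<bar>y\<bar> \<le> b" "\<bar>z\<bar> \<le> c"
  shows "\<bar>x + y + z\<bar> \<le> 3 * Max {a, b, c}"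
  using assms by (simp add: max_def abs_if split: if_splits)

lemma quadratic_linear_resonance_add:
  fixes \<alpha> \<beta> \<tau>0 \<tau>1 \<tau>2 k0 k1 k2 :: real
  assumes "\<alpha> \<noteq> 0" "\<tau>0 = \<tau>1 + \<tau>2" "k0 = k1 + k2"
  shows "\<bar>\<alpha>\<bar> * \<bar>k2\<bar> * \<bar>k0 + k1 - (\<beta> / \<alpha>) * sgn (\<tau>2 * k2)\<bar>
    \<le> 3 * Max {\<bar>\<tau>0 - \<alpha> * k0^2\<bar>, \<bar>\<tau>1 - \<alpha> * k1^2\<bar>, \<bar>\<bar>\<tau>2\<bar> - \<beta> * \<bar>k2\<bar>\<bar>}"
proof -
  let ?S = "sgn (\<tau>2 * k2)"
  have "\<alpha> * k2 * (k0 + k1 - (\<beta> / \<alpha>) * ?S)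
      = - (\<tau>0 - \<alpha> * k0^2) + (\<tau>1 - \<alpha> * k1^2) + (\<tau>2 - ?S * \<beta> * k2)"
    using \<open>\<alpha> \<noteq> 0\<close> unfolding assms(2,3) by (simp add: field_simps power2_eq_square)
  then have "\<bar>\<alpha>\<bar> * \<bar>k2\<bar> * \<bar>k0 + k1 - (\<beta> / \<alpha>) * ?S\<bar>
      = \<bar>- (\<tau>0 - \<alpha> * k0^2) + (\<tau>1 - \<alpha> * k1^2) + (\<tau>2 - ?S * \<beta> * k2)\<bar>"
    by (simp only: abs_mult[symmetric])
  also have "\<dots> \<le> 3 * Max {\<bar>\<tau>0 - \<alpha> * k0^2\<bar>, \<bar>\<tau>1 - \<alpha> * k1^2\<bar>, \<bar>\<bar>\<tau>2\<bar> - \<beta> * \<bar>k2\<bar>\<bar>}"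
    using abs_sub_sgn_mult_le by (intro abs_add3_le_3_Max) simp_all
  finally show ?thesis .
qed

lemma quadratic_linear_resonance_diff:
  fixes \<alpha> \<beta> \<tau>0 \<tau>1 \<tau>2 k0 k1 k2 :: real
  assumes "\<alpha> \<noteq> 0" "\<tau>0 = \<tau>1 - \<tau>2" "k0 = k1 - k2"
  shows "\<bar>\<alpha>\<bar> * \<bar>k0\<bar> * \<bar>k1 + k2 - (\<beta> / \<alpha>) * sgn (\<tau>0 * k0)\<bar>
    \<le> 3 * Max {\<bar>\<bar>\<tau>0\<bar> - \<beta> * \<bar>k0\<bar>\<bar>, \<bar>\<tau>1 - \<alpha> * k1^2\<bar>, \<bar>\<tau>2 - \<alpha> * k2^2\<bar>}"
proof -
  let ?S = "sgn (\<tau>0 * k0)"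
  have "\<alpha> * k0 * (k1 + k2 - (\<beta> / \<alpha>) * ?S)
      = (\<tau>0 - ?S * \<beta> * k0) + - (\<tau>1 - \<alpha> * k1^2) + (\<tau>2 - \<alpha> * k2^2)"
    using \<open>\<alpha> \<noteq> 0\<close> unfolding assms(2,3) by (simp add: field_simps power2_eq_square)
  then have "\<bar>\<alpha>\<bar> * \<bar>k0\<bar> * \<bar>k1 + k2 - (\<beta> / \<alpha>) * ?S\<bar>
      = \<bar>(\<tau>0 - ?S * \<beta> * k0) + - (\<tau>1 - \<alpha> * k1^2) + (\<tau>2 - \<alpha> * k2^2)\<bar>"
    by (simp only: abs_mult[symmetric])
  also have "\<dots> \<le> 3 * Max {\<bar>\<bar>\<tau>0\<bar> - \<beta> * \<bar>k0\<bar>\<bar>, \<bar>\<tau>1 - \<alpha> * k1^2\<bar>, \<bar>\<tau>2 - \<alpha> * k2^2\<bar>}"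
    using abs_sub_sgn_mult_le by (intro abs_add3_le_3_Max) simp_all
  finally show ?thesis .
qed

theorem lemma4p4:
  "\<exists>c>0. \<forall>(\<alpha>::real) (\<beta>::real). \<alpha> > 0 \<longrightarrow> \<beta> > 0 \<longrightarrow>
     (\<forall>(\<tau>0::real) \<tau>1 \<tau>2 (k0::int) k1 k2.
        \<tau>0 = \<tau>1 + \<tau>2 \<longrightarrow> k0 = k1 + k2 \<longrightarrow> k0 \<noteq> 0 \<longrightarrow>
        Max {\<bar>\<tau>0 - \<alpha> * (of_int k0)^2\<bar>, \<bar>\<tau>1 - \<alpha> * (of_int k1)^2\<bar>,
             \<bar>\<bar>\<tau>2\<bar> - \<beta> * \<bar>of_int k2\<bar>\<bar>}
        \<ge> c * (\<bar>\<alpha>\<bar> * \<bar>of_int k2\<bar> *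
               \<bar>of_int k0 + of_int k1 - (\<beta> / \<alpha>) * sgn (\<tau>2 * of_int k2)\<bar>)) \<and>
     (\<forall>(\<tau>0::real) \<tau>1 \<tau>2 (k0::int) k1 k2.
        \<tau>0 = \<tau>1 - \<tau>2 \<longrightarrow> k0 = k1 - k2 \<longrightarrow> k0 \<noteq> 0 \<longrightarrow>
        Max {\<bar>\<bar>\<tau>0\<bar> - \<beta> * \<bar>of_int k0\<bar>\<bar>, \<bar>\<tau>1 - \<alpha> * (of_int k1)^2\<bar>,
             \<bar>\<tau>2 - \<alpha> * (of_int k2)^2\<bar>}
        \<ge> c * (\<bar>\<alpha>\<bar> * \<bar>of_int k0\<bar> *
               \<bar>of_int k1 + of_int k2 - (\<beta> / \<alpha>) * sgn (\<tau>0 * of_int k0)\<bar>))"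
  apply (intro exI[of _ "1/3"] conjI allI impI)
    apply simp
  subgoal for \<alpha> \<beta> \<tau>0 \<tau>1 \<tau>2 k0 k1 k2
    using quadratic_linear_resonance_add[of \<alpha> \<tau>0 \<tau>1 \<tau>2 "of_int k0" "of_int k1" "of_int k2" \<beta>]
    by simp
  subgoal for \<alpha> \<beta> \<tau>0 \<tau>1 \<tau>2 k0 k1 k2
    using quadratic_linear_resonance_diff[of \<alpha> \<tau>0 \<tau>1 \<tau>2 "of_int k0" "of_int k1" "of_int k2" \<beta>]
    by simp
  done

end
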